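(* Let $(G,\rho)$ be a ribbon graph and $v\in V(G)$ with $\rho_v=(e_1,\dots,e_{i+j})$, $i,j\ge1$. Assume that for all $1\le k\le i$ and $i+1\le l\le i+j$, the edges $e_k$ and $e_l$ lie in different $v$-components of $(G,\rho)$. Let $(G',\rho')$ be the union of all $v$-components containing some edge of $\{e_1,\dots,e_i\}$ and $(G'',\rho'')$ the union of all $v$-components containing some edge of $\{e_{i+1},\dots,e_{i+j}\}$, with cyclic orders restricted from $\rho$. Then the genus of $(G,\rho)$ equals the genus of $(G',\rho')$ plus the genus of $(G'',\rho'')$.
   Context: Graphs are finite, connected, loopless, possibly with multiple edges. A ribbon graph $(G,\rho)$ assigns to each vertex $u$ a cyclic order $\rho_u$ on incident edges. For a vertex $v$, a $v$-component is the full ribbon subgraph induced on the vertices of a connected component of $G\setminus v$ together with $v$. Genus: a cycle of a ribbon graph is a closed walk which, whenever it enters a vertex $u$ along an edge $e$, leaves along the edge following $e$ in $\rho_u$; with $\operatorname{cyc}$ the number of cycles, the genus $g$ satisfies $2g=2-|V|+|E|-\operatorname{cyc}$. *)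

theory Defs
  imports Complex_Main
begin

text \<open>A (multi)graph is given by a vertex set V, an edge set E and an endpoint map
  ends :: 'e => 'v set (loopless: every edge has exactly two distinct endpoints).
  A rotation system rho assigns to each vertex u a successor function rho u on edges;
  on the edges incident to u it must be a single cyclic permutation.\<close>

definition incident :: "'e set \<Rightarrow> ('e \<Rightarrow> 'v set) \<Rightarrow> 'v \<Rightarrow> 'e set" where
  "incident E ends u = {e \<in> E. u \<in> ends e}"

definition adj_rel :: "'v set \<Rightarrow> 'e set \<Rightarrow> ('e \<Rightarrow> 'v set) \<Rightarrow> ('v \<times> 'v) set" where
  "adj_rel V E ends = {(u, w). u \<in> V \<and> w \<in> V \<and> (\<exists>e\<in>E. ends e = {u, w})}"

definition graph :: "'v set \<Rightarrow> 'e set \<Rightarrow> ('e \<Rightarrow> 'v set) \<Rightarrow> bool" where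
  "graph V E ends \<longleftrightarrow> finite V \<and> finite E \<and> V \<noteq> {} \<and>
     (\<forall>e\<in>E. ends e \<subseteq> V \<and> card (ends e) = 2)"

definition connected_graph :: "'v set \<Rightarrow> 'e set \<Rightarrow> ('e \<Rightarrow> 'v set) \<Rightarrow> bool" where
  "connected_graph V E ends \<longleftrightarrow> graph V E ends \<and>
     (\<forall>u\<in>V. \<forall>w\<in>V. (u, w) \<in> (adj_rel V E ends)\<^sup>*)"

definition cyclic_order_on :: "'e set \<Rightarrow> ('e \<Rightarrow> 'e) \<Rightarrow> bool" where
  "cyclic_order_on A r \<longleftrightarrow> bij_betw r A A \<and> (\<forall>e\<in>A. \<forall>e'\<in>A. \<exists>n. (r ^^ n) e = e')"

definition ribbon_graph ::
  "'v set \<Rightarrow> 'e set \<Rightarrow> ('e \<Rightarrow> 'v set) \<Rightarrow> ('v \<Rightarrow> 'e \<Rightarrow> 'e) \<Rightarrow> bool" where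
  "ribbon_graph V E ends rho \<longleftrightarrow> connected_graph V E ends \<and>
     (\<forall>u\<in>V. cyclic_order_on (incident E ends u) (rho u))"

text \<open>Darts: an edge together with one of its endpoints; (e,u) means
  "the walk has arrived at u along e".\<close>
definition darts :: "'e set \<Rightarrow> ('e \<Rightarrow> 'v set) \<Rightarrow> ('e \<times> 'v) set" where
  "darts E ends = {(e, u). e \<in> E \<and> u \<in> ends e}"

definition other_end :: "('e \<Rightarrow> 'v set) \<Rightarrow> 'e \<Rightarrow> 'v \<Rightarrow> 'v" where
  "other_end ends e u = (THE w. w \<in> ends e \<and> w \<noteq> u)"

definition face_step ::
  "('e \<Rightarrow> 'v set) \<Rightarrow> ('v \<Rightarrow> 'e \<Rightarrow> 'e) \<Rightarrow> 'e \<times> 'v \<Rightarrow> 'e \<times> 'v" where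
  "face_step ends rho d = (let u = snd d; e' = rho u (fst d) in (e', other_end ends e' u))"

definition face_orbit ::
  "('e \<Rightarrow> 'v set) \<Rightarrow> ('v \<Rightarrow> 'e \<Rightarrow> 'e) \<Rightarrow> 'e \<times> 'v \<Rightarrow> ('e \<times> 'v) set" where
  "face_orbit ends rho d = {(face_step ends rho ^^ n) d | n. True}"

text \<open>Number of cycles (faces) of the ribbon graph.\<close>
definition cyc :: "'e set \<Rightarrow> ('e \<Rightarrow> 'v set) \<Rightarrow> ('v \<Rightarrow> 'e \<Rightarrow> 'e) \<Rightarrow> nat" where
  "cyc E ends rho = card (face_orbit ends rho ` darts E ends)"

definition genus ::
  "'v set \<Rightarrow> 'e set \<Rightarrow> ('e \<Rightarrow> 'v set) \<Rightarrow> ('v \<Rightarrow> 'e \<Rightarrow> 'e) \<Rightarrow> real" where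
  "genus V E ends rho = (2 - real (card V) + real (card E) - real (cyc E ends rho)) / 2"

definition restrict_cyclic :: "'e set \<Rightarrow> ('e \<Rightarrow> 'e) \<Rightarrow> 'e \<Rightarrow> 'e" where
  "restrict_cyclic A r e = (r ^^ (LEAST k. k > 0 \<and> (r ^^ k) e \<in> A)) e"

definition comp_vertex_sets :: "'v set \<Rightarrow> 'e set \<Rightarrow> ('e \<Rightarrow> 'v set) \<Rightarrow> 'v \<Rightarrow> 'v set set" where
  "comp_vertex_sets V E ends v =
     (let V0 = V - {v}; E0 = {e \<in> E. v \<notin> ends e}
      in {{w \<in> V0. (u, w) \<in> (adj_rel V0 E0 ends)\<^sup>*} | u. u \<in> V0})"

text \<open>The v-component with vertex-set C \<union> {v} (C a component of G - v) is the full
  subgraph induced on C \<union> {v}; here its vertex and edge sets.\<close>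
definition vcomp_vertices :: "'v \<Rightarrow> 'v set \<Rightarrow> 'v set" where
  "vcomp_vertices v C = insert v C"

definition vcomp_edges :: "'e set \<Rightarrow> ('e \<Rightarrow> 'v set) \<Rightarrow> 'v \<Rightarrow> 'v set \<Rightarrow> 'e set" where
  "vcomp_edges E ends v C = {e \<in> E. ends e \<subseteq> insert v C}"

definition v_components :: "'v set \<Rightarrow> 'e set \<Rightarrow> ('e \<Rightarrow> 'v set) \<Rightarrow> 'v \<Rightarrow> ('v set \<times> 'e set) set" where
  "v_components V E ends v =
     (\<lambda>C. (vcomp_vertices v C, vcomp_edges E ends v C)) ` comp_vertex_sets V E ends v"

definition union_vcomps_containing ::
  "'v set \<Rightarrow> 'e set \<Rightarrow> ('e \<Rightarrow> 'v set) \<Rightarrow> 'v \<Rightarrow> 'e set \<Rightarrow> 'v set \<times> 'e set" where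
  "union_vcomps_containing V E ends v F =
     (let K = {H \<in> v_components V E ends v. \<exists>e\<in>F. e \<in> snd H}
      in (\<Union>(fst ` K), \<Union>(snd ` K)))"

end

theory Submission
  imports Defs
begin

(* The genus is determined by |V|, |E| and the number of faces, i.e. of cycles of the
   face-tracing permutation on darts. Only v is shared by G' and G'', so |V'| + |V''| = |V| + 1,
   and E is the disjoint union of E' and E''. Let a = e_i and b = e_(i+j). Away from the darts
   (a, v) and (b, v), tracing faces in G' or in G'' is the same as in G; at v, after a the rotation
   of G' jumps to e_1 = rho_v(b), and after b the rotation of G'' jumps to e_(i+1) = rho_v(a).
   So the face permutation of G is that of the disjoint union of G' and G'' composed with the
   transposition of (a, v) and (b, v). These darts lie on faces of different parts, and composing
   with the transposition merges those two faces: cyc = cyc' + cyc'' - 1, whence g = g' + g''. *)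

section \<open>Cycles of a self-map\<close>

definition funpow_orbit :: "('a \<Rightarrow> 'a) \<Rightarrow> 'a \<Rightarrow> 'a set" where
  "funpow_orbit f x = {(f ^^ n) x | n. True}"

lemma funpow_in_funpow_orbit: "(f ^^ n) x \<in> funpow_orbit f x"
  unfolding funpow_orbit_def by blast

lemma self_in_funpow_orbit: "x \<in> funpow_orbit f x"
  using funpow_in_funpow_orbit[of 0] by simp

lemma funpow_orbit_step: "y \<in> funpow_orbit f x \<Longrightarrow> f y \<in> funpow_orbit f x"
  unfolding funpow_orbit_def by (auto intro: exI[of _ "Suc _"])

lemma funpow_closed: "f ` D \<subseteq> D \<Longrightarrow> x \<in> D \<Longrightarrow> (f ^^ n) x \<in> D"
  by (induction n) auto

lemma funpow_orbit_least:
  assumes "x \<in> S" "\<And>z. z \<in> S \<Longrightarrow> f z \<in> S"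
  shows "funpow_orbit f x \<subseteq> S"
  using funpow_closed[of f S x] assms unfolding funpow_orbit_def by blast

lemma funpow_orbit_subset: "f ` D \<subseteq> D \<Longrightarrow> x \<in> D \<Longrightarrow> funpow_orbit f x \<subseteq> D"
  by (rule funpow_orbit_least) auto

lemma funpow_orbit_trans: "y \<in> funpow_orbit f x \<Longrightarrow> funpow_orbit f y \<subseteq> funpow_orbit f x"
  by (rule funpow_orbit_least) (auto intro: funpow_orbit_step)

lemma funpow_orbit_cong:
  assumes "x \<in> S" "\<And>z. z \<in> S \<Longrightarrow> f z = g z" "\<And>z. z \<in> S \<Longrightarrow> f z \<in> S"
  shows "funpow_orbit f x = funpow_orbit g x"
proof -
  have "(f ^^ n) x = (g ^^ n) x \<and> (f ^^ n) x \<in> S" for n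
    by (induction n) (use assms in auto)
  then show ?thesis unfolding funpow_orbit_def by auto
qed

lemma funpow_cancel_inj_on:
  assumes "inj_on f D" "f ` D \<subseteq> D" "x \<in> D" "y \<in> D" "(f ^^ n) x = (f ^^ n) y"
  shows "x = y"
  using assms(5)
proof (induction n)
  case (Suc n)
  with assms(1) funpow_closed[OF assms(2)] assms(3,4) show ?case
    by (auto dest: inj_onD)
qed simp

lemma funpow_periodic:
  assumes "finite D" "inj_on f D" "f ` D \<subseteq> D" "x \<in> D"
  obtains p where "p > 0" "(f ^^ p) x = x"
proof -
  have "(\<lambda>n. (f ^^ n) x) ` {0..card D} \<subseteq> D"
    using funpow_closed[OF assms(3,4)] by auto
  then have "\<not> inj_on (\<lambda>n. (f ^^ n) x) {0..card D}"
    using card_inj_on_le[OF _ _ assms(1)] by fastforce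
  then obtain m n where "m < n" "(f ^^ m) x = (f ^^ n) x"
    unfolding inj_on_def by (metis linorder_neqE_nat)
  then have "(f ^^ m) x = (f ^^ m) ((f ^^ (n - m)) x)"
    by (metis add_diff_inverse_nat funpow_add less_imp_not_less o_apply)
  then have "(f ^^ (n - m)) x = x"
    using funpow_cancel_inj_on[OF assms(2,3,4) funpow_closed[OF assms(3,4)]] by metis
  with \<open>m < n\<close> show ?thesis using that[of "n - m"] by simp
qed

lemma funpow_orbit_sym:
  assumes "finite D" "inj_on f D" "f ` D \<subseteq> D" "x \<in> D" "y \<in> funpow_orbit f x"
  shows "x \<in> funpow_orbit f y"
proof -
  obtain p where p: "p > 0" "(f ^^ p) x = x" using funpow_periodic[OF assms(1-4)] .
  obtain n where y: "y = (f ^^ n) x" using assms(5) unfolding funpow_orbit_def by auto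
  have multiple: "(f ^^ (p * k)) x = x" for k
    by (induction k) (simp_all add: funpow_add p(2) flip: funpow_add[unfolded comp_def])
  have "n \<le> p * n" using p(1) by simp
  then have "(f ^^ (p * n - n)) y = (f ^^ (p * n)) x"
    unfolding y by (metis funpow_add le_add_diff_inverse2 o_apply)
  then show ?thesis using multiple funpow_in_funpow_orbit by metis
qed

lemma funpow_orbit_eq:
  assumes "finite D" "inj_on f D" "f ` D \<subseteq> D" "x \<in> D" "y \<in> funpow_orbit f x"
  shows "funpow_orbit f y = funpow_orbit f x"
  using funpow_orbit_trans[OF assms(5)] funpow_orbit_trans[OF funpow_orbit_sym[OF assms]] by blast

text \<open>Along the g-cycle through x, f follows g everywhere except at x itself; entering the
  cycle at g x from y, f therefore runs once around it and reaches x.\<close>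
lemma funpow_orbit_detour:
  assumes "finite D" "inj_on g D" "g ` D \<subseteq> D" "x \<in> D"
    and agree: "\<And>z. z \<in> funpow_orbit g x - {x} \<Longrightarrow> f z = g z" and "f y = g x"
  shows "x \<in> funpow_orbit f y"
proof -
  define p where "p = (LEAST p. p > 0 \<and> (g ^^ p) x = x)"
  have "p > 0 \<and> (g ^^ p) x = x"
    unfolding p_def by (rule LeastI_ex) (use funpow_periodic[OF assms(1-4)] in blast)
  then have p: "p > 0" "(g ^^ p) x = x" by auto
  have follow: "(f ^^ m) (g x) = (g ^^ Suc m) x" if "m < p" for m
    using that
  proof (induction m)
    case (Suc m)
    have "(g ^^ Suc m) x \<noteq> x"
      using not_less_Least[of "Suc m" "\<lambda>p. p > 0 \<and> (g ^^ p) x = x"] Suc.prems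
      unfolding p_def by auto
    then have "f ((g ^^ Suc m) x) = g ((g ^^ Suc m) x)"
      using funpow_in_funpow_orbit[of "Suc m" g x] by (intro agree) simp
    with Suc show ?case by simp
  qed simp
  have "(f ^^ p) y = (f ^^ (p - 1)) (g x)"
    using p(1) \<open>f y = g x\<close> by (metis Suc_diff_1 comp_apply funpow_Suc_right)
  also have "\<dots> = x" using follow[of "p - 1"] p by simp
  finally show ?thesis using funpow_in_funpow_orbit by metis
qed

lemma card_funpow_orbits_Un:
  assumes "finite (D1 \<union> D2)" "D1 \<inter> D2 = {}" "f ` D1 \<subseteq> D1" "f ` D2 \<subseteq> D2"
  shows "card (funpow_orbit f ` (D1 \<union> D2)) = card (funpow_orbit f ` D1) + card (funpow_orbit f ` D2)"
proof -
  have "funpow_orbit f x \<noteq> funpow_orbit f y" if "x \<in> D1" "y \<in> D2" for x y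
    using funpow_orbit_least[of x D1 f] self_in_funpow_orbit[of y f] assms(2-4) that by blast
  then have "funpow_orbit f ` D1 \<inter> funpow_orbit f ` D2 = {}" by blast
  then show ?thesis using assms(1) by (simp add: image_Un card_Un_disjoint)
qed

locale successor_swap =
  fixes D :: "'a set" and f g :: "'a \<Rightarrow> 'a" and a b :: 'a
  assumes fin: "finite D" and inj_f: "inj_on f D" and f_closed: "f ` D \<subseteq> D"
    and a: "a \<in> D" and b: "b \<in> D"
    and g_a: "g a = f b" and g_b: "g b = f a" and g_other: "\<And>x. x \<in> D - {a, b} \<Longrightarrow> g x = f x"
begin

lemma g_closed: "g ` D \<subseteq> D"
proof (rule image_subsetI)
  fix x assume "x \<in> D"
  then show "g x \<in> D" using a b f_closed g_a g_b g_other by (cases "x = a \<or> x = b") auto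
qed

lemma inj_g: "inj_on g D"
proof -
  define tau where "tau x = (if x = a then b else if x = b then a else x)" for x
  have involution: "tau (tau x) = x" for x unfolding tau_def by simp
  have tau_D: "tau x \<in> D" if "x \<in> D" for x using that a b unfolding tau_def by auto
  have g_tau: "g x = f (tau x)" if "x \<in> D" for x
    using that g_a g_b g_other unfolding tau_def by auto
  show ?thesis
  proof (rule inj_onI)
    fix x y assume xy: "x \<in> D" "y \<in> D" "g x = g y"
    then have "f (tau x) = f (tau y)" using g_tau by simp
    then have "tau x = tau y" using inj_onD[OF inj_f _ tau_D tau_D] xy by blast
    then show "x = y" using involution by metis
  qed
qed

lemma swap_sym: "successor_swap D g f a b"
  by unfold_locales (simp_all add: fin inj_g g_closed a b g_a g_b g_other)

lemma orbits_pair_subset: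
  "funpow_orbit f a \<union> funpow_orbit f b \<subseteq> funpow_orbit g a \<union> funpow_orbit g b" (is "_ \<subseteq> ?M")
proof -
  have M_D: "?M \<subseteq> D"
    using funpow_orbit_subset[OF g_closed a] funpow_orbit_subset[OF g_closed b] by (rule Un_least)
  have closed: "f z \<in> ?M" if z: "z \<in> ?M" for z
  proof -
    consider "z = a" | "z = b" | "z \<in> D - {a, b}" using z M_D by blast
    then show ?thesis
    proof cases
      case 1 then show ?thesis
        using funpow_orbit_step[OF self_in_funpow_orbit[of b g]] by (simp add: g_b)
    next
      case 2 then show ?thesis
        using funpow_orbit_step[OF self_in_funpow_orbit[of a g]] by (simp add: g_a)
    next
      case 3 then show ?thesis using z g_other funpow_orbit_step by (metis UnE UnI1 UnI2)
    qed
  qed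
  have "funpow_orbit f a \<subseteq> ?M"
    by (rule funpow_orbit_least[OF _ closed]) (simp add: self_in_funpow_orbit)
  moreover have "funpow_orbit f b \<subseteq> ?M"
    by (rule funpow_orbit_least[OF _ closed]) (simp add: self_in_funpow_orbit)
  ultimately show ?thesis by (rule Un_least)
qed

lemma orbit_merge:
  assumes apart: "b \<notin> funpow_orbit g a"
  shows "funpow_orbit f a = funpow_orbit g a \<union> funpow_orbit g b"
proof -
  have "b \<in> funpow_orbit f a"
  proof (rule funpow_orbit_detour[OF fin inj_g g_closed b])
    fix z assume z: "z \<in> funpow_orbit g b - {b}"
    have "a \<notin> funpow_orbit g b" using apart funpow_orbit_sym[OF fin inj_g g_closed b] by blast
    then have "z \<in> D - {a, b}" using z funpow_orbit_subset[OF g_closed b] by blast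
    then show "f z = g z" using g_other by simp
  qed (simp add: g_b)
  then have "funpow_orbit f a \<union> funpow_orbit f b = funpow_orbit f a"
    by (rule Un_absorb2[OF funpow_orbit_trans])
  then show ?thesis
    using orbits_pair_subset successor_swap.orbits_pair_subset[OF swap_sym] by blast
qed

lemma orbit_unchanged:
  assumes x: "x \<in> D" "a \<notin> funpow_orbit g x" "b \<notin> funpow_orbit g x"
  shows "funpow_orbit f x = funpow_orbit g x"
proof -
  have off_ab: "z \<in> D - {a, b}" if "z \<in> funpow_orbit g x" for z
    using that x funpow_orbit_subset[OF g_closed x(1)] by blast
  have "funpow_orbit g x = funpow_orbit f x"
  proof (rule funpow_orbit_cong[where S = "funpow_orbit g x"])
    fix z assume "z \<in> funpow_orbit g x"
    then show "g z = f z" by (intro g_other off_ab)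
  qed (simp_all add: self_in_funpow_orbit funpow_orbit_step)
  then show ?thesis ..
qed

definition untouched_orbits :: "'a set set" where
  "untouched_orbits =
     {funpow_orbit g x | x. x \<in> D \<and> a \<notin> funpow_orbit g x \<and> b \<notin> funpow_orbit g x}"

lemma g_orbits:
  "funpow_orbit g ` D = insert (funpow_orbit g a) (insert (funpow_orbit g b) untouched_orbits)"
proof (intro equalityI subsetI)
  fix Q assume "Q \<in> funpow_orbit g ` D"
  then obtain x where x: "x \<in> D" "Q = funpow_orbit g x" by blast
  have "funpow_orbit g y = Q" if "y \<in> Q" for y
    using funpow_orbit_eq[OF fin inj_g g_closed x(1)] that x(2) by blast
  then show "Q \<in> insert (funpow_orbit g a) (insert (funpow_orbit g b) untouched_orbits)"
    using x unfolding untouched_orbits_def by blast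
next
  fix Q assume "Q \<in> insert (funpow_orbit g a) (insert (funpow_orbit g b) untouched_orbits)"
  then show "Q \<in> funpow_orbit g ` D" using a b unfolding untouched_orbits_def by blast
qed

lemma f_orbits:
  assumes apart: "b \<notin> funpow_orbit g a"
  shows "funpow_orbit f ` D = insert (funpow_orbit f a) untouched_orbits"
proof (intro equalityI subsetI)
  fix Q assume "Q \<in> funpow_orbit f ` D"
  then obtain x where x: "x \<in> D" "Q = funpow_orbit f x" by blast
  show "Q \<in> insert (funpow_orbit f a) untouched_orbits"
  proof (cases "a \<in> funpow_orbit g x \<or> b \<in> funpow_orbit g x")
    case True
    then have "x \<in> funpow_orbit f a"
      using funpow_orbit_sym[OF fin inj_g g_closed x(1)] orbit_merge[OF apart] by blast
    then show ?thesis using funpow_orbit_eq[OF fin inj_f f_closed a] x by blast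
  next
    case False
    then have "Q = funpow_orbit g x" using orbit_unchanged x by blast
    then show ?thesis using False x(1) unfolding untouched_orbits_def by blast
  qed
next
  fix Q assume "Q \<in> insert (funpow_orbit f a) untouched_orbits"
  then consider "Q = funpow_orbit f a"
    | x where "x \<in> D" "a \<notin> funpow_orbit g x" "b \<notin> funpow_orbit g x" "Q = funpow_orbit g x"
    unfolding untouched_orbits_def by blast
  then show "Q \<in> funpow_orbit f ` D"
  proof cases
    case 1 then show ?thesis using a by blast
  next
    case 2 then show ?thesis using orbit_unchanged by (metis image_eqI)
  qed
qed

lemma card_orbits:
  assumes apart: "b \<notin> funpow_orbit g a"
  shows "card (funpow_orbit g ` D) = card (funpow_orbit f ` D) + 1"
proof -
  have "untouched_orbits \<subseteq> funpow_orbit g ` D" unfolding untouched_orbits_def by blast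
  then have "finite untouched_orbits" using fin finite_subset by blast
  moreover have "funpow_orbit f a \<notin> untouched_orbits" "funpow_orbit g a \<notin> untouched_orbits"
    "funpow_orbit g b \<notin> untouched_orbits"
    unfolding untouched_orbits_def using self_in_funpow_orbit[of a f] self_in_funpow_orbit[of a g]
      self_in_funpow_orbit[of b g] by blast+
  moreover have "funpow_orbit g a \<noteq> funpow_orbit g b"
    using apart self_in_funpow_orbit by metis
  ultimately show ?thesis unfolding g_orbits f_orbits[OF apart] by simp
qed

end

section \<open>Faces of a ribbon graph\<close>

lemma face_orbit_eq_funpow_orbit: "face_orbit ends rho = funpow_orbit (face_step ends rho)"
  unfolding face_orbit_def funpow_orbit_def ..

lemma restrict_cyclic_eq_funpow:
  assumes "0 < m" "(r ^^ m) e \<in> A" "\<And>k. 0 < k \<Longrightarrow> k < m \<Longrightarrow> (r ^^ k) e \<notin> A"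
  shows "restrict_cyclic A r e = (r ^^ m) e"
proof -
  have "(LEAST k. k > 0 \<and> (r ^^ k) e \<in> A) = m"
    by (rule Least_equality) (use assms in \<open>auto simp: not_less[symmetric]\<close>)
  then show ?thesis unfolding restrict_cyclic_def by simp
qed

lemma restrict_cyclic_eq_self: "r e \<in> A \<Longrightarrow> restrict_cyclic A r e = r e"
  using restrict_cyclic_eq_funpow[of 1 r e A] by simp

lemma other_end:
  assumes "card (ends e) = 2" "u \<in> ends e"
  shows "ends e = {u, other_end ends e u}" "other_end ends e u \<noteq> u"
proof -
  obtain w where w: "ends e = {u, w}" "w \<noteq> u"
    using assms by (auto simp: card_2_iff doubleton_eq_iff)
  then have "other_end ends e u = w" unfolding other_end_def by (intro the_equality) auto
  with w show "ends e = {u, other_end ends e u}" "other_end ends e u \<noteq> u" by auto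
qed

lemma other_end_inj:
  assumes "card (ends e) = 2" "u \<in> ends e" "w \<in> ends e" "other_end ends e u = other_end ends e w"
  shows "u = w"
  using other_end[where ends = ends and e = e, OF assms(1,2)]
    other_end[where ends = ends and e = e, OF assms(1,3)] assms(4)
  by (metis doubleton_eq_iff)

lemma face_step_Pair: "face_step ends r (e, u) = (r u e, other_end ends (r u e) u)"
  unfolding face_step_def Let_def by simp

lemma face_step_in_darts:
  assumes "r u e \<in> incident E ends u" "card (ends (r u e)) = 2"
  shows "face_step ends r (e, u) \<in> darts E ends"
proof -
  have "u \<in> ends (r u e)" "r u e \<in> E" using assms(1) unfolding incident_def by auto
  moreover have "other_end ends (r u e) u \<in> ends (r u e)"
    using other_end[where ends = ends and e = "r u e", OF assms(2) calculation(1)] by blast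
  ultimately show ?thesis unfolding face_step_Pair darts_def by simp
qed

lemma finite_darts:
  assumes "graph V E ends"
  shows "finite (darts E ends)"
proof -
  have "darts E ends \<subseteq> E \<times> V" using assms unfolding graph_def darts_def by auto
  then show ?thesis using assms finite_subset unfolding graph_def by blast
qed

context
  fixes V :: "'v set" and E :: "'e set" and ends :: "'e \<Rightarrow> 'v set" and rho :: "'v \<Rightarrow> 'e \<Rightarrow> 'e"
  assumes rg: "ribbon_graph V E ends rho"
begin

lemma ribbon_graph_rotation_bij:
  "u \<in> V \<Longrightarrow> bij_betw (rho u) (incident E ends u) (incident E ends u)"
  using rg unfolding ribbon_graph_def cyclic_order_on_def by simp

lemma ribbon_graph_rotation_incident:
  assumes "(e, u) \<in> darts E ends"
  shows "rho u e \<in> incident E ends u"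
proof -
  have "u \<in> V" "e \<in> incident E ends u"
    using assms rg unfolding darts_def incident_def ribbon_graph_def connected_graph_def graph_def
    by auto
  then show ?thesis using ribbon_graph_rotation_bij bij_betw_apply by metis
qed

lemma ribbon_graph_face_step_darts: "face_step ends rho ` darts E ends \<subseteq> darts E ends"
proof (rule image_subsetI)
  fix d assume "d \<in> darts E ends"
  moreover obtain e u where d: "d = (e, u)" by (cases d)
  ultimately have "rho u e \<in> incident E ends u" using ribbon_graph_rotation_incident by simp
  moreover have "card (ends (rho u e)) = 2"
    using calculation rg unfolding incident_def ribbon_graph_def connected_graph_def graph_def
    by auto
  ultimately show "face_step ends rho d \<in> darts E ends" unfolding d by (rule face_step_in_darts)
qed

lemma ribbon_graph_inj_on_face_step: "inj_on (face_step ends rho) (darts E ends)"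
proof (rule inj_onI)
  fix d1 d2 assume "d1 \<in> darts E ends" "d2 \<in> darts E ends"
    and "face_step ends rho d1 = face_step ends rho d2"
  moreover obtain e1 u1 e2 u2 where pairs: "d1 = (e1, u1)" "d2 = (e2, u2)" by fastforce
  ultimately have d: "(e1, u1) \<in> darts E ends" "(e2, u2) \<in> darts E ends"
    and same_edge: "rho u1 e1 = rho u2 e2"
    and same_end: "other_end ends (rho u1 e1) u1 = other_end ends (rho u2 e2) u2"
    by (auto simp: face_step_Pair)
  have inc: "rho u1 e1 \<in> incident E ends u1" "rho u2 e2 \<in> incident E ends u2"
    using ribbon_graph_rotation_incident d by blast+
  then have "card (ends (rho u1 e1)) = 2"
    using rg unfolding incident_def ribbon_graph_def connected_graph_def graph_def by auto
  then have "u1 = u2"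
    using other_end_inj inc same_edge same_end unfolding incident_def by fastforce
  moreover have "u1 \<in> V" "e1 \<in> incident E ends u1" "e2 \<in> incident E ends u1"
    using d rg \<open>u1 = u2\<close>
    unfolding darts_def incident_def ribbon_graph_def connected_graph_def graph_def by auto
  ultimately show "d1 = d2"
    using ribbon_graph_rotation_bij same_edge pairs by (metis bij_betw_imp_inj_on inj_onD)
qed

end

section \<open>Components of G - v\<close>

definition comp_minus :: "'v set \<Rightarrow> 'e set \<Rightarrow> ('e \<Rightarrow> 'v set) \<Rightarrow> 'v \<Rightarrow> 'v \<Rightarrow> 'v set" where
  "comp_minus V E ends v u =
     {w \<in> V - {v}. (u, w) \<in> (adj_rel (V - {v}) {e \<in> E. v \<notin> ends e} ends)\<^sup>*}"

text \<open>Every edge has an end other than v, and all such ends lie in the same component of G - v,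
  so the choice below is immaterial (see \<open>edge_comp_eq\<close>).\<close>
definition edge_comp :: "'v set \<Rightarrow> 'e set \<Rightarrow> ('e \<Rightarrow> 'v set) \<Rightarrow> 'v \<Rightarrow> 'e \<Rightarrow> 'v set" where
  "edge_comp V E ends v e = comp_minus V E ends v (SOME u. u \<in> ends e \<and> u \<noteq> v)"

locale connected_graph_at =
  fixes V :: "'v set" and E :: "'e set" and ends :: "'e \<Rightarrow> 'v set" and v :: 'v
  assumes connected: "connected_graph V E ends" and vertex: "v \<in> V"
begin

abbreviation "adj_minus \<equiv> adj_rel (V - {v}) {e \<in> E. v \<notin> ends e} ends"
abbreviation "vcomp \<equiv> comp_minus V E ends v"
abbreviation "ecomp \<equiv> edge_comp V E ends v"

lemma edge_ends: "e \<in> E \<Longrightarrow> ends e \<subseteq> V \<and> card (ends e) = 2"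
  using connected unfolding connected_graph_def graph_def by simp

lemma comp_minus_subset: "vcomp u \<subseteq> V - {v}"
  unfolding comp_minus_def by blast

lemma self_in_comp_minus: "u \<in> V - {v} \<Longrightarrow> u \<in> vcomp u"
  unfolding comp_minus_def by blast

lemma comp_minus_eq:
  assumes "w \<in> vcomp u"
  shows "vcomp w = vcomp u"
proof -
  have "sym adj_minus" unfolding adj_rel_def sym_def by (auto simp: insert_commute)
  moreover have "(u, w) \<in> adj_minus\<^sup>*" using assms unfolding comp_minus_def by blast
  ultimately have "(w, u) \<in> adj_minus\<^sup>*" by (meson sym_rtrancl symD)
  with \<open>(u, w) \<in> adj_minus\<^sup>*\<close> show ?thesis
    unfolding comp_minus_def by (auto intro: rtrancl_trans)
qed

lemma edge_ends_subset_comp_minus: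
  assumes "e \<in> E" "u \<in> ends e" "u \<noteq> v"
  shows "ends e \<subseteq> insert v (vcomp u)"
proof
  fix w assume w: "w \<in> ends e"
  have uw: "ends e = {u, w}" if "w \<noteq> u"
    using edge_ends[OF assms(1)] assms(2) w that by (auto simp: card_2_iff)
  show "w \<in> insert v (vcomp u)"
  proof (cases "w = u \<or> w = v")
    case True then show ?thesis using self_in_comp_minus edge_ends[OF assms(1)] assms by auto
  next
    case False
    then have "(u, w) \<in> adj_minus"
      using edge_ends[OF assms(1)] assms w uw unfolding adj_rel_def by fastforce
    then show ?thesis using w edge_ends[OF assms(1)] False unfolding comp_minus_def by auto
  qed
qed

lemma edge_comp_eq:
  assumes "e \<in> E" "u \<in> ends e" "u \<noteq> v"
  shows "ecomp e = vcomp u"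
proof -
  have "\<exists>u. u \<in> ends e \<and> u \<noteq> v" using assms by blast
  then have "(SOME u. u \<in> ends e \<and> u \<noteq> v) \<in> ends e - {v}" by (rule someI2_ex) blast
  then have "(SOME u. u \<in> ends e \<and> u \<noteq> v) \<in> vcomp u"
    using edge_ends_subset_comp_minus[OF assms] by blast
  then show ?thesis unfolding edge_comp_def using comp_minus_eq by blast
qed

lemma edge_has_end_off_vertex:
  assumes "e \<in> E"
  obtains u where "u \<in> ends e" "u \<noteq> v"
  using edge_ends[OF assms] by (force simp: card_2_iff)

lemma edge_comp_in_comps:
  assumes "e \<in> E"
  shows "ecomp e \<in> vcomp ` (V - {v})" "ends e \<subseteq> insert v (ecomp e)"
proof -
  obtain u where u: "u \<in> ends e" "u \<noteq> v" using edge_has_end_off_vertex[OF assms] .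
  then have "u \<in> V - {v}" using edge_ends[OF assms] by blast
  then show "ecomp e \<in> vcomp ` (V - {v})" using edge_comp_eq[OF assms u] by blast
  show "ends e \<subseteq> insert v (ecomp e)"
    using edge_comp_eq[OF assms u] edge_ends_subset_comp_minus[OF assms u] by simp
qed

lemma edge_comp_eq_if_meet:
  assumes "e \<in> E" "e' \<in> E" "z \<in> ecomp e" "z \<in> ecomp e'"
  shows "ecomp e = ecomp e'"
proof -
  obtain x y where "ecomp e = vcomp x" "ecomp e' = vcomp y"
    using edge_comp_in_comps(1) assms(1,2) by (meson imageE)
  then show ?thesis using comp_minus_eq assms(3,4) by metis
qed

lemma edge_comp_unique:
  assumes "e \<in> E" "C \<in> vcomp ` (V - {v})" "ends e \<subseteq> insert v C"
  shows "C = ecomp e"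
proof -
  obtain u where u: "u \<in> ends e" "u \<noteq> v" using edge_has_end_off_vertex[OF assms(1)] .
  obtain x where "C = vcomp x" using assms(2) by blast
  moreover have "u \<in> vcomp x" using u assms(3) calculation by auto
  ultimately show ?thesis using edge_comp_eq[OF assms(1) u] comp_minus_eq by metis
qed

lemma comp_minus_reached_from_vertex:
  assumes "w \<in> V - {v}"
  shows "\<exists>e \<in> incident E ends v. ecomp e = vcomp w"
proof -
  have "(v, w) \<in> (adj_rel V E ends)\<^sup>*" using connected vertex assms unfolding connected_graph_def by auto
  then show ?thesis using assms
  proof (induction rule: rtrancl_induct)
    case (step x w)
    obtain e where e: "e \<in> E" "ends e = {x, w}" using step.hyps(2) unfolding adj_rel_def by auto
    show ?case
    proof (cases "x = v")
      case True
      then have "e \<in> incident E ends v" using e unfolding incident_def by auto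
      moreover have "ecomp e = vcomp w" using edge_comp_eq[OF e(1)] e step.prems by auto
      ultimately show ?thesis by blast
    next
      case False
      then have "(x, w) \<in> adj_minus"
        using step.hyps(2) step.prems e unfolding adj_rel_def by auto
      then have "w \<in> vcomp x" using step.prems unfolding comp_minus_def by auto
      then show ?thesis using step.IH False step.hyps(2) comp_minus_eq
        unfolding adj_rel_def by auto
    qed
  qed simp
qed

lemma comp_vertex_sets_eq: "comp_vertex_sets V E ends v = vcomp ` (V - {v})"
  unfolding comp_vertex_sets_def comp_minus_def Let_def by auto

lemma vcomp_edges_eq:
  assumes "C \<in> vcomp ` (V - {v})"
  shows "vcomp_edges E ends v C = {e \<in> E. ecomp e = C}"
  using edge_comp_unique[OF _ assms] edge_comp_in_comps(2) unfolding vcomp_edges_def by blast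

lemma v_components_eq:
  "v_components V E ends v = (\<lambda>C. (insert v C, {e \<in> E. ecomp e = C})) ` vcomp ` (V - {v})"
  unfolding v_components_def comp_vertex_sets_eq vcomp_vertices_def
  using vcomp_edges_eq by (auto intro!: image_cong)

lemma union_vcomps_containing_eq:
  assumes "F \<subseteq> E" "F \<noteq> {}"
  shows "union_vcomps_containing V E ends v F =
           (insert v (\<Union>(ecomp ` F)), {e \<in> E. ecomp e \<in> ecomp ` F})"
proof -
  have "{H \<in> v_components V E ends v. \<exists>e\<in>F. e \<in> snd H}
          = (\<lambda>C. (insert v C, {e \<in> E. ecomp e = C})) ` ecomp ` F"
    unfolding v_components_eq using assms(1) edge_comp_in_comps by fastforce
  then show ?thesis unfolding union_vcomps_containing_def Let_def using assms(2) by auto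
qed

lemma incident_union_vcomps:
  assumes "e0 \<in> E" "ecomp e0 \<in> ecomp ` F" "u \<in> ends e0" "u \<noteq> v"
  shows "incident {e \<in> E. ecomp e \<in> ecomp ` F} ends u = incident E ends u"
  using assms edge_comp_eq unfolding incident_def by auto

end

section \<open>Splitting a ribbon graph at a vertex\<close>

lemma nth_in_set_take_iff:
  assumes "distinct xs" "l < length xs"
  shows "xs ! l \<in> set (take i xs) \<longleftrightarrow> l < i"
proof
  assume "xs ! l \<in> set (take i xs)"
  then obtain k where "k < length (take i xs)" "take i xs ! k = xs ! l"
    by (auto simp: in_set_conv_nth)
  then have "k < i" "xs ! k = xs ! l" by simp_all
  moreover have "k < length xs" using \<open>k < length (take i xs)\<close> by simp
  ultimately show "l < i" using nth_eq_iff_index_eq[OF assms(1)] assms(2) by metis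
next
  assume "l < i"
  then show "xs ! l \<in> set (take i xs)" using assms(2) by (auto simp: in_set_conv_nth)
qed

locale vertex_split =
  fixes V :: "'v set" and E :: "'e set" and ends :: "'e \<Rightarrow> 'v set"
    and rho :: "'v \<Rightarrow> 'e \<Rightarrow> 'e" and v :: 'v and es :: "'e list" and i j :: nat
    and V1 :: "'v set" and E1 :: "'e set" and V2 :: "'v set" and E2 :: "'e set"
  assumes rg: "ribbon_graph V E ends rho"
    and vV: "v \<in> V"
    and ij: "i \<ge> 1" "j \<ge> 1"
    and es_len: "length es = i + j"
    and es_dist: "distinct es"
    and es_set: "set es = incident E ends v"
    and es_rot: "\<forall>k < i + j. rho v (es ! k) = es ! (Suc k mod (i + j))"
    and sep: "\<forall>k < i. \<forall>l. i \<le> l \<and> l < i + j \<longrightarrow>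
               (\<forall>H \<in> v_components V E ends v. \<not> (es ! k \<in> snd H \<and> es ! l \<in> snd H))"
    and G1: "(V1, E1) = union_vcomps_containing V E ends v (set (take i es))"
    and G2: "(V2, E2) = union_vcomps_containing V E ends v (set (drop i es))"
begin

text \<open>rho1 and rho2 are the rotation systems rho' and rho'' of the two parts; left_last and
  right_last are the edges e_i and e_(i+j).\<close>
abbreviation "left_edges \<equiv> set (take i es)"
abbreviation "right_edges \<equiv> set (drop i es)"
abbreviation "left_last \<equiv> es ! (i - 1)"
abbreviation "right_last \<equiv> es ! (i + j - 1)"
abbreviation "rho1 \<equiv> \<lambda>u. restrict_cyclic (incident E1 ends u) (rho u)"
abbreviation "rho2 \<equiv> \<lambda>u. restrict_cyclic (incident E2 ends u) (rho u)"

sublocale connected_graph_at V E ends v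
  using rg vV unfolding ribbon_graph_def by unfold_locales simp_all

lemma nth_in_left_edges_iff: "l < i + j \<Longrightarrow> es ! l \<in> left_edges \<longleftrightarrow> l < i"
  using nth_in_set_take_iff[OF es_dist] es_len by simp

lemma left_right_edges:
  "left_edges \<union> right_edges = incident E ends v"
  "left_edges \<subseteq> E" "right_edges \<subseteq> E" "left_edges \<noteq> {}" "right_edges \<noteq> {}"
proof -
  show lr: "left_edges \<union> right_edges = incident E ends v"
    using es_set by (metis append_take_drop_id set_append)
  then show "left_edges \<subseteq> E" "right_edges \<subseteq> E" unfolding incident_def by auto
  show "left_edges \<noteq> {}" "right_edges \<noteq> {}" using ij es_len by auto
qed

lemma left_right_separated:
  assumes "e \<in> left_edges" "e' \<in> right_edges" "H \<in> v_components V E ends v"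
  shows "\<not> (e \<in> snd H \<and> e' \<in> snd H)"
proof -
  obtain k where "k < i" "e = es ! k" using assms(1) es_len by (auto simp: in_set_conv_nth)
  moreover obtain l where "l < j" "e' = es ! (i + l)"
    using assms(2) es_len by (auto simp: in_set_conv_nth)
  ultimately show ?thesis using sep[rule_format, of k "i + l"] assms(3) by simp
qed

lemma edge_comp_left_right_distinct:
  assumes "e \<in> left_edges" "e' \<in> right_edges"
  shows "ecomp e \<noteq> ecomp e'"
proof
  assume same: "ecomp e = ecomp e'"
  let ?H = "(insert v (ecomp e), {x \<in> E. ecomp x = ecomp e})"
  have "e \<in> E" "e' \<in> E" using assms left_right_edges by blast+
  then have "?H \<in> v_components V E ends v" "e \<in> snd ?H" "e' \<in> snd ?H"
    using v_components_eq edge_comp_in_comps(1) same by auto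
  then show False using left_right_separated[OF assms] by blast
qed

lemma components_left_right:
  "vcomp ` (V - {v}) = ecomp ` left_edges \<union> ecomp ` right_edges"
proof
  show "vcomp ` (V - {v}) \<subseteq> ecomp ` left_edges \<union> ecomp ` right_edges"
  proof
    fix C assume "C \<in> vcomp ` (V - {v})"
    then obtain e where "e \<in> incident E ends v" "ecomp e = C"
      using comp_minus_reached_from_vertex by blast
    then show "C \<in> ecomp ` left_edges \<union> ecomp ` right_edges"
      using left_right_edges(1) by blast
  qed
  show "ecomp ` left_edges \<union> ecomp ` right_edges \<subseteq> vcomp ` (V - {v})"
    using edge_comp_in_comps(1) left_right_edges(2,3) by blast
qed

lemma left_right_graphs:
  "V1 = insert v (\<Union>(ecomp ` left_edges))" "E1 = {e \<in> E. ecomp e \<in> ecomp ` left_edges}"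
  "V2 = insert v (\<Union>(ecomp ` right_edges))" "E2 = {e \<in> E. ecomp e \<in> ecomp ` right_edges}"
  using G1 G2 union_vcomps_containing_eq left_right_edges by simp_all

lemma card_vertices_split: "card V1 + card V2 = card V + 1"
proof -
  define A1 where "A1 = \<Union>(ecomp ` left_edges)"
  define A2 where "A2 = \<Union>(ecomp ` right_edges)"
  have "\<Union>(vcomp ` (V - {v})) = V - {v}"
    using comp_minus_subset self_in_comp_minus by blast
  then have A12: "A1 \<union> A2 = V - {v}"
    unfolding A1_def A2_def components_left_right by auto
  have "ecomp e \<inter> ecomp e' = {}" if "e \<in> left_edges" "e' \<in> right_edges" for e e'
    using that edge_comp_eq_if_meet edge_comp_left_right_distinct left_right_edges(2,3) by blast
  then have disjoint: "A1 \<inter> A2 = {}" unfolding A1_def A2_def by auto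
  have "finite V" using connected unfolding connected_graph_def graph_def by simp
  then have "finite (A1 \<union> A2)" unfolding A12 by simp
  then have fin: "finite A1" "finite A2" by simp_all
  have "v \<notin> A1" "v \<notin> A2" using A12 by auto
  then have "card V1 = Suc (card A1)" "card V2 = Suc (card A2)"
    unfolding left_right_graphs A1_def[symmetric] A2_def[symmetric] using fin by simp_all
  moreover have "card (V - {v}) = card A1 + card A2"
    unfolding A12[symmetric] using fin disjoint by (rule card_Un_disjoint)
  ultimately show ?thesis using card.remove[OF \<open>finite V\<close> vV] by simp
qed

lemma edge_comps_left_right_disjoint: "ecomp ` left_edges \<inter> ecomp ` right_edges = {}"
  using edge_comp_left_right_distinct by (auto simp: disjoint_iff)

lemma edges_split: "E1 \<union> E2 = E" "E1 \<inter> E2 = {}"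
proof -
  have "ecomp e \<in> ecomp ` left_edges \<union> ecomp ` right_edges" if "e \<in> E" for e
    using edge_comp_in_comps(1)[OF that] components_left_right by simp
  then show "E1 \<union> E2 = E" unfolding left_right_graphs by auto
  show "E1 \<inter> E2 = {}"
    unfolding left_right_graphs using edge_comps_left_right_disjoint by auto
qed

lemma incident_left: "incident E1 ends v = left_edges"
proof
  show "left_edges \<subseteq> incident E1 ends v"
    using left_right_edges(1) unfolding left_right_graphs incident_def by auto
  show "incident E1 ends v \<subseteq> left_edges"
  proof
    fix e assume "e \<in> incident E1 ends v"
    then have "e \<in> left_edges \<union> right_edges" "ecomp e \<in> ecomp ` left_edges"
      using left_right_edges(1) unfolding left_right_graphs incident_def by auto
    then show "e \<in> left_edges" using edge_comps_left_right_disjoint by auto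
  qed
qed

lemma rotation_funpow: "k < i + j \<Longrightarrow> (rho v ^^ m) (es ! k) = es ! ((k + m) mod (i + j))"
proof (induction m)
  case (Suc m)
  have "(k + m) mod (i + j) < i + j" using ij by simp
  then show ?case using Suc es_rot by (simp add: mod_Suc_eq)
qed simp

lemma rotation_left_inner:
  assumes "e \<in> left_edges" "e \<noteq> left_last"
  shows "rho v e \<in> left_edges"
proof -
  obtain k where k: "k < i" "e = es ! k" using assms(1) es_len by (auto simp: in_set_conv_nth)
  then have "k + 1 < i" using assms(2) by (cases "k + 1 = i") auto
  then show ?thesis using rotation_funpow[of k 1] k nth_in_left_edges_iff[of "k + 1"] by simp
qed

text \<open>From the last left edge, the rotation at v runs through all j right edges before it
  returns to the first left edge.\<close>
lemma rotation_left_last: "rho1 v left_last = rho v right_last"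
proof -
  have "i - 1 + (j + 1) = i + j" "i + j - 1 + 1 = i + j" using ij by simp_all
  then have wrap: "(rho v ^^ (j + 1)) left_last = es ! 0" "rho v right_last = es ! 0"
    using rotation_funpow[of "i - 1" "j + 1"] rotation_funpow[of "i + j - 1" 1] ij by simp_all
  have "rho1 v left_last = (rho v ^^ (j + 1)) left_last"
  proof (rule restrict_cyclic_eq_funpow)
    show "(rho v ^^ (j + 1)) left_last \<in> incident E1 ends v"
      unfolding wrap incident_left using nth_in_left_edges_iff[of 0] ij by simp
    fix m assume m: "0 < m" "m < j + 1"
    then have "i - 1 + m < i + j" "\<not> i - 1 + m < i" using ij by auto
    moreover have "(rho v ^^ m) left_last = es ! (i - 1 + m)"
      using rotation_funpow[of "i - 1" m] calculation(1) ij by simp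
    ultimately show "(rho v ^^ m) left_last \<notin> incident E1 ends v"
      unfolding incident_left using nth_in_left_edges_iff by simp
  qed simp
  then show ?thesis using wrap by simp
qed

lemma rho1_on_darts:
  assumes "(e, u) \<in> darts E1 ends"
  shows "rho1 u e \<in> incident E1 ends u \<and> ((e, u) \<noteq> (left_last, v) \<longrightarrow> rho1 u e = rho u e)"
proof -
  have e: "e \<in> E1" "u \<in> ends e" using assms unfolding darts_def by auto
  consider (last) "u = v" "e = left_last" | (inner) "u = v" "e \<noteq> left_last" | (off) "u \<noteq> v"
    by blast
  then show ?thesis
  proof cases
    case last
    have "es ! 0 \<in> left_edges" using nth_in_left_edges_iff[of 0] ij by simp
    then show ?thesis
      using last rotation_left_last rotation_funpow[of "i + j - 1" 1] ij incident_left by simp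
  next
    case inner
    then have "e \<in> left_edges" using e incident_left unfolding incident_def by blast
    then have "rho v e \<in> incident E1 ends v"
      using rotation_left_inner inner incident_left by simp
    then show ?thesis using inner restrict_cyclic_eq_self by metis
  next
    case off
    have "(e, u) \<in> darts E ends" using e edges_split(1) unfolding darts_def by auto
    then have "rho u e \<in> incident E ends u" by (rule ribbon_graph_rotation_incident[OF rg])
    moreover have "incident E1 ends u = incident E ends u"
      using incident_union_vcomps[OF _ _ e(2) off] e(1) unfolding left_right_graphs by blast
    ultimately show ?thesis using restrict_cyclic_eq_self by metis
  qed
qed

lemma face_step_left:
  assumes "x \<in> darts E1 ends"
  shows "face_step ends rho1 x \<in> darts E1 ends"
    and "x \<noteq> (left_last, v) \<Longrightarrow> face_step ends rho1 x = face_step ends rho x"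
proof -
  obtain e u where x: "x = (e, u)" by (cases x)
  have inc: "rho1 u e \<in> incident E1 ends u"
    using rho1_on_darts assms unfolding x by blast
  then have "rho1 u e \<in> E" using edges_split(1) unfolding incident_def by blast
  then have "card (ends (rho1 u e)) = 2" using edge_ends by blast
  with inc show "face_step ends rho1 x \<in> darts E1 ends"
    unfolding x by (rule face_step_in_darts)
  show "x \<noteq> (left_last, v) \<Longrightarrow> face_step ends rho1 x = face_step ends rho x"
    using rho1_on_darts assms unfolding x face_step_Pair by simp
qed

lemma left_last_dart: "(left_last, v) \<in> darts E1 ends"
proof -
  have "left_last \<in> incident E1 ends v"
    unfolding incident_left using nth_in_left_edges_iff[of "i - 1"] ij by simp
  then show ?thesis unfolding incident_def darts_def by simp
qed

lemma face_step_left_last: "face_step ends rho1 (left_last, v) = face_step ends rho (right_last, v)"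
  unfolding face_step_Pair rotation_left_last ..

text \<open>Rotating es by i exchanges the two sides, so facts about the first part transfer to the
  second.\<close>
lemma vertex_split_rotate: "vertex_split V E ends rho v (rotate i es) j i V2 E2 V1 E1"
proof -
  let ?es = "rotate i es"
  have "?es = drop i es @ take i es" using rotate_drop_take[of i es] es_len ij by simp
  then have sides: "set (take j ?es) = right_edges" "set (drop j ?es) = left_edges"
    using es_len by simp_all
  have nth: "?es ! k = es ! ((k + i) mod (i + j))" if "k < i + j" for k
    using nth_rotate[of k es i] that es_len by (simp add: add.commute)
  have rot: "rho v (?es ! k) = ?es ! (Suc k mod (j + i))" if k: "k < j + i" for k
  proof -
    have "(k + i) mod (i + j) < i + j" using ij by simp
    then have "rho v (?es ! k) = es ! (Suc ((k + i) mod (i + j)) mod (i + j))"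
      using es_rot nth k by (simp add: add.commute)
    also have "\<dots> = ?es ! (Suc k mod (j + i))"
      using nth[of "Suc k mod (i + j)"] ij by (simp add: add.commute mod_Suc_eq mod_add_right_eq)
    finally show ?thesis .
  qed
  have "\<not> (?es ! k \<in> snd H \<and> ?es ! l \<in> snd H)"
    if "k < j" "j \<le> l" "l < j + i" "H \<in> v_components V E ends v" for k l H
  proof -
    have "?es ! k \<in> set (take j ?es)" "?es ! l \<notin> set (take j ?es)"
      using nth_in_set_take_iff[of ?es] that es_dist es_len by simp_all
    moreover have "?es ! l \<in> set (take j ?es @ drop j ?es)"
      unfolding append_take_drop_id using nth_mem[of l ?es] that es_len by simp
    ultimately have "?es ! l \<in> set (drop j ?es)" "?es ! k \<in> set (take j ?es)"
      unfolding set_append by blast+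
    then have "?es ! l \<in> left_edges" "?es ! k \<in> right_edges" unfolding sides .
    from left_right_separated[OF this that(4)] show ?thesis by blast
  qed
  then show ?thesis
    using rg vV ij es_len es_dist es_set rot G1 G2 sides by unfold_locales simp_all
qed

lemma rotate_left_last: "rotate i es ! (j - 1) = right_last"
proof -
  have "j - 1 < length es" using ij es_len by simp
  then have "rotate i es ! (j - 1) = es ! ((i + (j - 1)) mod length es)" by (rule nth_rotate)
  also have "(i + (j - 1)) mod length es = i + j - 1" unfolding es_len using ij by simp
  finally show ?thesis .
qed

lemma rotate_right_last: "rotate i es ! (j + i - 1) = left_last"
proof -
  have "j + i - 1 < length es" using ij es_len by simp
  then have "rotate i es ! (j + i - 1) = es ! ((i + (j + i - 1)) mod length es)" by (rule nth_rotate)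
  also have "i + (j + i - 1) = (i - 1) + length es" using ij es_len by simp
  also have "((i - 1) + length es) mod length es = i - 1"
    unfolding mod_add_self2 using ij es_len by simp
  finally show ?thesis .
qed

lemmas right_last_dart =
  vertex_split.left_last_dart[OF vertex_split_rotate, unfolded rotate_left_last]
lemmas face_step_right =
  vertex_split.face_step_left[OF vertex_split_rotate, unfolded rotate_left_last]
lemmas face_step_right_last =
  vertex_split.face_step_left_last[OF vertex_split_rotate, unfolded rotate_left_last rotate_right_last]

lemma darts_split: "darts E1 ends \<union> darts E2 ends = darts E ends" "darts E1 ends \<inter> darts E2 ends = {}"
  using edges_split unfolding darts_def by auto

definition split_face_step :: "'e \<times> 'v \<Rightarrow> 'e \<times> 'v" where
  "split_face_step x = (if x \<in> darts E1 ends then face_step ends rho1 x else face_step ends rho2 x)"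

lemma split_face_step_left: "x \<in> darts E1 ends \<Longrightarrow> split_face_step x = face_step ends rho1 x"
  unfolding split_face_step_def by simp

lemma split_face_step_right: "x \<in> darts E2 ends \<Longrightarrow> split_face_step x = face_step ends rho2 x"
  using darts_split(2) unfolding split_face_step_def by auto

lemma successor_swap_split_face_step:
  "successor_swap (darts E ends) (face_step ends rho) split_face_step (left_last, v) (right_last, v)"
proof
  show "finite (darts E ends)" using connected finite_darts unfolding connected_graph_def by blast
  show "inj_on (face_step ends rho) (darts E ends)" "face_step ends rho ` darts E ends \<subseteq> darts E ends"
    using ribbon_graph_inj_on_face_step[OF rg] ribbon_graph_face_step_darts[OF rg] .
  show "(left_last, v) \<in> darts E ends" "(right_last, v) \<in> darts E ends"
    using left_last_dart right_last_dart darts_split(1) by blast+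
  show "split_face_step (left_last, v) = face_step ends rho (right_last, v)"
    using split_face_step_left left_last_dart face_step_left_last by simp
  show "split_face_step (right_last, v) = face_step ends rho (left_last, v)"
    using split_face_step_right right_last_dart face_step_right_last by simp
  fix x assume x: "x \<in> darts E ends - {(left_last, v), (right_last, v)}"
  show "split_face_step x = face_step ends rho x"
  proof (cases "x \<in> darts E1 ends")
    case True then show ?thesis using x split_face_step_left face_step_left(2) by simp
  next
    case False
    then have "x \<in> darts E2 ends" using x darts_split(1) by blast
    then show ?thesis using x split_face_step_right face_step_right(2) by simp
  qed
qed

lemma cyc_split: "cyc E ends rho + 1 = cyc E1 ends rho1 + cyc E2 ends rho2"
proof -
  let ?g = split_face_step and ?D1 = "darts E1 ends" and ?D2 = "darts E2 ends"
  note swap = successor_swap_split_face_step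
  have closed: "?g ` ?D1 \<subseteq> ?D1" "?g ` ?D2 \<subseteq> ?D2"
    using split_face_step_left face_step_left(1) split_face_step_right face_step_right(1)
    by (simp_all add: image_subset_iff)
  have "funpow_orbit ?g (left_last, v) \<subseteq> ?D1"
    by (rule funpow_orbit_subset[OF closed(1) left_last_dart])
  then have "(right_last, v) \<notin> funpow_orbit ?g (left_last, v)"
    using right_last_dart darts_split(2) by blast
  then have "cyc E ends rho + 1 = card (funpow_orbit ?g ` darts E ends)"
    unfolding cyc_def face_orbit_eq_funpow_orbit by (rule successor_swap.card_orbits[OF swap, symmetric])
  also have "\<dots> = card (funpow_orbit ?g ` ?D1) + card (funpow_orbit ?g ` ?D2)"
    using card_funpow_orbits_Un[OF _ darts_split(2) closed] successor_swap.fin[OF swap]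
    unfolding darts_split(1) by simp
  also have "funpow_orbit ?g ` ?D1 = funpow_orbit (face_step ends rho1) ` ?D1"
    using split_face_step_left face_step_left(1)
    by (intro image_cong refl funpow_orbit_cong[of _ ?D1]) simp_all
  also have "funpow_orbit ?g ` ?D2 = funpow_orbit (face_step ends rho2) ` ?D2"
    using split_face_step_right face_step_right(1)
    by (intro image_cong refl funpow_orbit_cong[of _ ?D2]) simp_all
  finally show ?thesis unfolding cyc_def face_orbit_eq_funpow_orbit .
qed

lemma card_edges_split: "card E = card E1 + card E2"
proof -
  have "finite (E1 \<union> E2)" using edges_split(1) connected unfolding connected_graph_def graph_def by simp
  then have "finite E1" "finite E2" by simp_all
  then show ?thesis using card_Un_disjoint[of E1 E2] edges_split by simp
qed

end

theorem lemma4p6: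
  fixes V :: "'v set" and E :: "'e set" and ends :: "'e \<Rightarrow> 'v set"
    and rho :: "'v \<Rightarrow> 'e \<Rightarrow> 'e" and v :: 'v and es :: "'e list" and i j :: nat
  assumes rg: "ribbon_graph V E ends rho"
    and vV: "v \<in> V"
    and ij: "i \<ge> 1" "j \<ge> 1"
    and es_len: "length es = i + j"
    and es_dist: "distinct es"
    and es_set: "set es = incident E ends v"
    and es_rot: "\<forall>k < i + j. rho v (es ! k) = es ! (Suc k mod (i + j))"
    and sep: "\<forall>k < i. \<forall>l. i \<le> l \<and> l < i + j \<longrightarrow>
               (\<forall>H \<in> v_components V E ends v. \<not> (es ! k \<in> snd H \<and> es ! l \<in> snd H))"
    and G1: "(V1, E1) = union_vcomps_containing V E ends v (set (take i es))"
    and G2: "(V2, E2) = union_vcomps_containing V E ends v (set (drop i es))"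
  shows "genus V E ends rho =
           genus V1 E1 ends (\<lambda>u. restrict_cyclic (incident E1 ends u) (rho u))
         + genus V2 E2 ends (\<lambda>u. restrict_cyclic (incident E2 ends u) (rho u))"
proof -
  interpret vertex_split V E ends rho v es i j V1 E1 V2 E2
    using assms by (simp add: vertex_split_def)
  have "real (card V1) + real (card V2) = real (card V) + 1"
    using card_vertices_split by (metis of_nat_1 of_nat_add)
  moreover have "real (card E) = real (card E1) + real (card E2)"
    using card_edges_split by simp
  moreover have "real (cyc E ends rho) + 1 = real (cyc E1 ends rho1) + real (cyc E2 ends rho2)"
    using cyc_split by (metis of_nat_1 of_nat_add)
  ultimately show ?thesis unfolding genus_def by (simp add: field_simps)
qed

end
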